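(* Let $X\subset\mathbb{R}^2$ be a standard Peano continuum, $(Y,d)$ a metric space and $f:X\to Y$ a map. Let $\{x_n\}$ be a sequence of distinct points of $X$ such that each $x_n$ lies on some isolated boundary circle $C_m\subset\mathrm{Fr}(X)$ and each such circle contains at most finitely many of the $x_n$. Let $\{y_n\}$ be a sequence in $\mathrm{im}(f)$ with $d(f(x_n),y_n)\to0$. Then there exists a map $\hat f:X\to Y$ homotopic to $f$ with $\hat f(x_n)=y_n$ for all $n$.
   Context: A Peano continuum is a compact, connected, locally path connected metric space. For $X\subset\mathbb{R}^2$, $\mathrm{int}(X)$ is the largest open subset of $\mathbb{R}^2$ contained in $X$ and $\mathrm{Fr}(X)=X\setminus\mathrm{int}(X)$. A 2-dimensional Peano continuum $X\subset\mathbb{R}^2$ is standard if for each component $U$ of $\mathbb{R}^2\setminus X$, $\partial U$ is a round Euclidean circle isolated in $\mathrm{Fr}(X)$; these circles $\partial U$ are the isolated boundary circles of $\mathrm{Fr}(X)$. *)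

theory Defs
  imports "HOL-Analysis.Analysis"
begin

definition peano_continuum :: "'a::metric_space set \<Rightarrow> bool" where
  "peano_continuum X \<longleftrightarrow> X \<noteq> {} \<and> compact X \<and> connected X \<and> locally path_connected X"

definition Fr :: "(real^2) set \<Rightarrow> (real^2) set" where
  "Fr X = X - interior X"

text \<open>A Peano continuum in the plane is 2-dimensional iff it has nonempty interior.\<close>
definition two_dim_peano_continuum :: "(real^2) set \<Rightarrow> bool" where
  "two_dim_peano_continuum X \<longleftrightarrow> peano_continuum X \<and> interior X \<noteq> {}"

definition round_circle :: "(real^2) set \<Rightarrow> bool" where
  "round_circle C \<longleftrightarrow> (\<exists>c r. r > 0 \<and> C = sphere c r)"

text \<open>A subset C of Fr(X) is isolated in Fr(X) iff it is open in Fr(X).\<close>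
definition standard_peano_continuum :: "(real^2) set \<Rightarrow> bool" where
  "standard_peano_continuum X \<longleftrightarrow> two_dim_peano_continuum X \<and>
     (\<forall>U \<in> components (- X). round_circle (frontier U) \<and>
         openin (top_of_set (Fr X)) (frontier U))"

definition isolated_boundary_circles :: "(real^2) set \<Rightarrow> (real^2) set set" where
  "isolated_boundary_circles X = {frontier U | U. U \<in> components (- X)}"

end

theory Submission
  imports Defs
begin

text \<open>Near a point of an isolated boundary circle, a standard Peano continuum \<open>X\<close> looks like a
  half-disc: the complementary component bounded by the circle is a round disc or the outside of
  one, and no other part of the complement comes close. So a small disc around the point retracts
  radially onto \<open>X\<close>, and \<open>f\<close> can be changed by a homotopy supported in that disc which first
  drags a neighbourhood onto the point and then moves its image along a path from \<open>f (x n)\<close> to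
  \<open>y n\<close>. As each circle carries only finitely many of the points, these discs can be taken
  pairwise disjoint; as \<open>dist (f (x n)) (y n) \<rightarrow> 0\<close> and the Peano continuum \<open>f ` X\<close> is uniformly
  locally path-connected, the paths, hence the homotopies, can be taken of sizes tending to zero.
  Then all the homotopies can be performed at once.\<close>

lemma inner_vec2: "(x::real^2) \<bullet> y = x$1 * y$1 + x$2 * y$2"
  by (simp add: inner_vec_def sum_2)

lemma inner_diff_centres_chord_eq_0:
  fixes c c' p z :: "'a::real_inner"
  assumes "dist c p = dist c z" "dist c' p = dist c' z"
  shows "(c' - c) \<bullet> (p - z) = 0"
proof -
  have "(p - c) \<bullet> (p - c) = (z - c) \<bullet> (z - c)" "(p - c') \<bullet> (p - c') = (z - c') \<bullet> (z - c')"
    using assms by (simp_all add: dist_norm norm_minus_commute flip: power2_norm_eq_inner)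
  then show ?thesis
    by (simp add: inner_commute algebra_simps)
qed

definition rot90 :: "real^2 \<Rightarrow> real^2" where
  "rot90 e = (\<chi> i. if i = 1 then - e$2 else e$1)"

lemma rot90_nth [simp]: "rot90 e $ 1 = - e$2" "rot90 e $ 2 = e$1"
  by (simp_all add: rot90_def)

lemma norm_cos_sin_rot90: "norm (cos \<theta> *\<^sub>R e + sin \<theta> *\<^sub>R rot90 e) = norm e"
proof -
  have "(cos \<theta> *\<^sub>R e + sin \<theta> *\<^sub>R rot90 e) \<bullet> (cos \<theta> *\<^sub>R e + sin \<theta> *\<^sub>R rot90 e) =
      (sin \<theta>^2 + cos \<theta>^2) * (e \<bullet> e)"
    unfolding inner_vec2
    by (simp only: vector_add_component vector_scaleR_component rot90_nth real_scaleR_def) algebra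
  then show ?thesis
    by (simp add: norm_eq_sqrt_inner)
qed

lemma eq_0_if_orthogonal_rot90:
  fixes d e :: "real^2"
  assumes "e \<noteq> 0" "d \<bullet> e = 0" "d \<bullet> rot90 e = 0"
  shows "d = 0"
proof -
  have pos: "e$1^2 + e$2^2 > 0"
    using assms(1) by (metis (mono_tags) exhaust_2 sum_power2_gt_zero_iff vec_eq_iff zero_index)
  have "d$1 * (e$1^2 + e$2^2) = e$1 * (d \<bullet> e) - e$2 * (d \<bullet> rot90 e)"
       "d$2 * (e$1^2 + e$2^2) = e$2 * (d \<bullet> e) + e$1 * (d \<bullet> rot90 e)"
    by (simp_all add: inner_vec2 algebra_simps power2_eq_square)
  then have "d$1 = 0" "d$2 = 0"
    using assms(2,3) pos by auto
  then show ?thesis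
    by (metis (mono_tags) exhaust_2 vec_eq_iff zero_index)
qed

text \<open>The chords from \<open>z\<close> to the two points of the arc at angles \<open>\<plusminus>\<theta>\<close> span the plane and are
  orthogonal to the difference of the centres.\<close>
lemma sphere_centre_eq_if_arc_subset:
  fixes c c' z :: "real^2"
  assumes "r' > 0" "\<epsilon> > 0" "z \<in> sphere c' r'" and arc: "sphere c' r' \<inter> ball z \<epsilon> \<subseteq> sphere c r"
  shows "c = c'"
proof -
  define e where "e = z - c'"
  define P where "P \<theta> = c' + cos \<theta> *\<^sub>R e + sin \<theta> *\<^sub>R rot90 e" for \<theta>
  have "e \<noteq> 0"
    using assms(1,3) by (auto simp: e_def)
  have on_sphere: "P \<theta> \<in> sphere c' r'" for \<theta>
  proof -
    have "dist (P \<theta>) c' = norm e"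
      using norm_cos_sin_rot90 by (simp add: P_def dist_norm add.assoc)
    then show ?thesis
      using assms(3) by (simp add: e_def dist_commute dist_norm norm_minus_commute)
  qed
  have "isCont P 0"
    unfolding P_def by (intro continuous_intros)
  moreover have "P 0 = z"
    by (simp add: P_def e_def)
  ultimately obtain \<theta>0 where "\<theta>0 > 0" and near: "\<And>\<theta>. dist \<theta> 0 < \<theta>0 \<Longrightarrow> dist (P \<theta>) z < \<epsilon>"
    using assms(2) by (metis continuous_at_eps_delta)
  define \<theta> where "\<theta> = min \<theta>0 1 / 2"
  have "0 < \<theta>" "\<theta> < pi"
    using \<open>\<theta>0 > 0\<close> pi_gt3 by (auto simp: \<theta>_def)
  then have "sin \<theta> > 0"
    by (rule sin_gt_zero)
  then have "cos \<theta> \<noteq> 1"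
    using cos_one_sin_zero by fastforce
  have "dist \<theta> 0 < \<theta>0" "dist (-\<theta>) 0 < \<theta>0"
    using \<open>\<theta>0 > 0\<close> by (auto simp: \<theta>_def)
  then have "P \<theta> \<in> sphere c' r' \<inter> ball z \<epsilon>" "P (-\<theta>) \<in> sphere c' r' \<inter> ball z \<epsilon>"
    "z \<in> sphere c' r' \<inter> ball z \<epsilon>"
    using near on_sphere assms(2,3) by (auto simp: dist_commute)
  then have "P \<theta> \<in> sphere c r" "P (-\<theta>) \<in> sphere c r" "z \<in> sphere c r"
    using arc by blast+
  then have "(c' - c) \<bullet> (P \<theta> - z) = 0" "(c' - c) \<bullet> (P (-\<theta>) - z) = 0"
    using on_sphere assms(3) by (auto intro!: inner_diff_centres_chord_eq_0)
  moreover have "P \<theta> - z = (cos \<theta> - 1) *\<^sub>R e + sin \<theta> *\<^sub>R rot90 e"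
    "P (-\<theta>) - z = (cos \<theta> - 1) *\<^sub>R e - sin \<theta> *\<^sub>R rot90 e"
    by (simp_all add: P_def e_def algebra_simps)
  ultimately have "(cos \<theta> - 1) * ((c' - c) \<bullet> e) + sin \<theta> * ((c' - c) \<bullet> rot90 e) = 0"
    "(cos \<theta> - 1) * ((c' - c) \<bullet> e) - sin \<theta> * ((c' - c) \<bullet> rot90 e) = 0"
    by (simp_all add: inner_add_right inner_diff_right)
  then have "(c' - c) \<bullet> e = 0" "(c' - c) \<bullet> rot90 e = 0"
    using \<open>cos \<theta> \<noteq> 1\<close> \<open>sin \<theta> > 0\<close> by (smt (verit) mult_eq_0_iff)+
  then have "c' - c = 0"
    by (rule eq_0_if_orthogonal_rot90[OF \<open>e \<noteq> 0\<close>])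
  then show ?thesis
    by simp
qed

lemma interior_sphere_empty:
  fixes c :: "'a::real_normed_vector"
  assumes "r > 0"
  shows "interior (sphere c r) = {}"
proof (rule ccontr)
  assume "interior (sphere c r) \<noteq> {}"
  then obtain p e where "e > 0" "ball p e \<subseteq> sphere c r"
    by (metis all_not_in_conv mem_interior)
  moreover from this have "p \<in> closure (ball c r)"
    using assms by (metis centre_in_ball closure_ball sphere_cball subsetD)
  ultimately obtain q where "q \<in> ball c r" "dist q p < e"
    using closure_approachable by blast
  with \<open>ball p e \<subseteq> sphere c r\<close> show False
    by (auto simp: dist_commute)
qed

lemma component_frontier_sphere_cases:
  fixes S :: "'a::euclidean_space set"
  assumes "2 \<le> DIM('a)" "open S" "U \<in> components S" "frontier U = sphere c r" "r > 0"
  shows "U = ball c r \<or> U = - cball c r"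
proof -
  have "open U" "U \<noteq> {}" "connected U"
    using assms(2,3) open_components in_components_nonempty in_components_connected by auto
  then have disjoint: "U \<inter> sphere c r = {}"
    using frontier_disjoint_eq[of U] assms(4) by blast
  have fills: "T \<subseteq> U" if "connected T" "T \<inter> U \<noteq> {}" "T \<inter> sphere c r = {}" for T
    using connected_Int_frontier[OF that(1)] that(2,3) assms(4) by blast
  show ?thesis
  proof (cases "U \<inter> ball c r = {}")
    case False
    have "U \<subseteq> ball c r"
      using connected_Int_frontier[OF \<open>connected U\<close> False] disjoint assms(5) by auto
    moreover have "ball c r \<inter> sphere c r = {}"
      by auto
    then have "ball c r \<subseteq> U"
      using False by (metis Int_commute connected_ball fills)
    ultimately show ?thesis
      by blast
  next
    case True
    then have "U \<subseteq> - cball c r"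
      using disjoint by (force simp: dist_commute)
    have "connected (- cball c r)"
      using assms(1) by (intro connected_complement_bounded_convex) auto
    moreover have "- cball c r \<inter> U \<noteq> {}" "- cball c r \<inter> sphere c r = {}"
      using \<open>U \<subseteq> - cball c r\<close> \<open>U \<noteq> {}\<close> by auto
    ultimately have "- cball c r \<subseteq> U"
      using fills by blast
    with \<open>U \<subseteq> - cball c r\<close> show ?thesis
      by blast
  qed
qed

lemma components_common_sphere_frontier:
  fixes S :: "'a::euclidean_space set"
  assumes "2 \<le> DIM('a)" "open S" "U \<in> components S" "V \<in> components S" "U \<noteq> V"
    "frontier U = sphere c r" "frontier V = sphere c r" "r > 0"
  shows "- S \<subseteq> sphere c r"
proof -
  have "U \<union> V = ball c r \<union> - cball c r"
    using component_frontier_sphere_cases[OF assms(1,2,3,6,8)]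
      component_frontier_sphere_cases[OF assms(1,2,4,7,8)] assms(5) by auto
  moreover have "U \<union> V \<subseteq> S"
    using assms(3,4) in_components_subset by blast
  ultimately show ?thesis
    by (force simp: dist_commute)
qed

lemma norm_radial_rescale_diff_le:
  fixes q c x :: "'a::real_normed_vector"
  assumes "q \<noteq> c" "\<bar>\<phi> (norm (q - c)) - norm (q - c)\<bar> \<le> \<bar>norm (q - c) - norm (x - c)\<bar>"
  shows "norm (c + (\<phi> (norm (q - c)) / norm (q - c)) *\<^sub>R (q - c) - q) \<le> dist q x"
proof -
  have "c + (\<phi> (norm (q - c)) / norm (q - c)) *\<^sub>R (q - c) - q =
      (\<phi> (norm (q - c)) / norm (q - c) - 1) *\<^sub>R (q - c)"
    by (simp add: algebra_simps)
  then have "norm (c + (\<phi> (norm (q - c)) / norm (q - c)) *\<^sub>R (q - c) - q) =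
      \<bar>\<phi> (norm (q - c)) / norm (q - c) - 1\<bar> * norm (q - c)"
    by simp
  also have "\<dots> = \<bar>\<phi> (norm (q - c)) - norm (q - c)\<bar>"
    using assms(1) by (simp add: abs_mult_pos' field_simps flip: abs_mult)
  also have "\<dots> \<le> norm ((q - c) - (x - c))"
    using assms(2) norm_triangle_ineq3[of "q - c" "x - c"] by linarith
  also have "\<dots> = dist q x"
    by (simp add: dist_norm)
  finally show ?thesis .
qed

lemma radial_local_retraction:
  fixes X U :: "'a::real_normed_vector set"
  assumes r: "r > 0" and x: "x \<in> sphere c r"
    and \<eta>: "\<eta> > 0" "\<And>q. q \<in> cball x \<eta> \<Longrightarrow> q \<notin> U \<Longrightarrow> q \<in> X" "U \<inter> X = {}"
    and \<epsilon>: "\<epsilon> > 0"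
    and \<phi>_cont: "continuous_on UNIV \<phi>"
    and \<phi>_close: "\<And>s. \<bar>\<phi> s - s\<bar> \<le> \<bar>s - r\<bar>"
    and \<phi>_avoids: "\<And>q. q \<noteq> c \<Longrightarrow> c + (\<phi> (norm (q - c)) / norm (q - c)) *\<^sub>R (q - c) \<notin> U"
    and \<phi>_id: "\<And>q. q \<notin> U \<Longrightarrow> \<phi> (norm (q - c)) = norm (q - c)"
  obtains \<delta> R where "\<delta> > 0" "\<delta> \<le> \<epsilon>" "continuous_on (cball x \<delta>) R"
     "R ` cball x \<delta> \<subseteq> X \<inter> cball x \<epsilon>" "\<And>q. q \<in> X \<inter> cball x \<delta> \<Longrightarrow> R q = q"
proof -
  define \<delta> where "\<delta> = min (min \<eta> \<epsilon>) r / 2"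
  define R where "R q = c + (\<phi> (norm (q - c)) / norm (q - c)) *\<^sub>R (q - c)" for q
  have "\<delta> > 0" "\<delta> \<le> \<epsilon>"
    using \<eta> \<epsilon> r by (simp_all add: \<delta>_def)
  have x_c: "norm (x - c) = r"
    using x by (simp add: dist_norm norm_minus_commute)
  have off_centre: "q - c \<noteq> 0" if "q \<in> cball x \<delta>" for q
    using that x r by (auto simp: \<delta>_def dist_commute)
  have "continuous_on (cball x \<delta>) R"
    unfolding R_def
    by (intro continuous_intros continuous_on_compose2[OF \<phi>_cont]) (use off_centre in auto)
  moreover have moves_little: "norm (R q - q) \<le> dist q x" if "q \<in> cball x \<delta>" for q
    unfolding R_def using off_centre[OF that] \<phi>_close x_c by (intro norm_radial_rescale_diff_le) auto
  moreover have "R ` cball x \<delta> \<subseteq> X \<inter> cball x \<epsilon>"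
  proof (rule image_subsetI)
    fix q assume q: "q \<in> cball x \<delta>"
    have "dist x (R q) \<le> dist x q + norm (R q - q)"
      using dist_triangle[of x "R q" q] by (simp add: dist_norm norm_minus_commute)
    also have "\<dots> \<le> 2 * \<delta>"
      using moves_little[OF q] q by (simp add: dist_commute)
    finally have "dist x (R q) \<le> 2 * \<delta>" .
    moreover have "R q \<notin> U"
      using \<phi>_avoids off_centre[OF q] by (simp add: R_def)
    ultimately show "R q \<in> X \<inter> cball x \<epsilon>"
      using \<eta>(2) by (auto simp: \<delta>_def)
  qed
  moreover have "R q = q" if "q \<in> X \<inter> cball x \<delta>" for q
  proof -
    have "\<phi> (norm (q - c)) = norm (q - c)" "q - c \<noteq> 0"
      using \<phi>_id[of q] \<eta>(3) off_centre that by auto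
    then show ?thesis
      by (simp add: R_def)
  qed
  ultimately show ?thesis
    using that \<open>\<delta> > 0\<close> \<open>\<delta> \<le> \<epsilon>\<close> by blast
qed

text \<open>Clamping the radius at \<open>r\<close> pushes points of the complementary component \<open>U\<close> radially
  onto the circle and fixes everything else.\<close>
lemma local_retraction_onto_sphere_side:
  fixes X U :: "'a::real_normed_vector set"
  assumes U: "U = ball c r \<or> U = - cball c r" and r: "r > 0" and x: "x \<in> sphere c r"
    and \<eta>: "\<eta> > 0" "\<And>q. q \<in> cball x \<eta> \<Longrightarrow> q \<notin> U \<Longrightarrow> q \<in> X" "U \<inter> X = {}"
    and \<epsilon>: "\<epsilon> > 0"
  obtains \<delta> R where "\<delta> > 0" "\<delta> \<le> \<epsilon>" "continuous_on (cball x \<delta>) R"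
     "R ` cball x \<delta> \<subseteq> X \<inter> cball x \<epsilon>" "\<And>q. q \<in> X \<inter> cball x \<delta> \<Longrightarrow> R q = q"
  using U
proof
  assume "U = ball c r"
  show ?thesis
  proof (rule radial_local_retraction[OF r x \<eta> \<epsilon>, of "\<lambda>s. max s r"])
    show "continuous_on UNIV (\<lambda>s. max s r)"
      by (intro continuous_intros)
    show "c + (max (norm (q - c)) r / norm (q - c)) *\<^sub>R (q - c) \<notin> U" if "q \<noteq> c" for q
      using that r \<open>U = ball c r\<close> by (simp add: dist_norm)
  qed (use that \<open>U = ball c r\<close> in \<open>auto simp: dist_norm norm_minus_commute\<close>)
next
  assume "U = - cball c r"
  show ?thesis
  proof (rule radial_local_retraction[OF r x \<eta> \<epsilon>, of "\<lambda>s. min s r"])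
    show "continuous_on UNIV (\<lambda>s. min s r)"
      by (intro continuous_intros)
    show "c + (min (norm (q - c)) r / norm (q - c)) *\<^sub>R (q - c) \<notin> U" if "q \<noteq> c" for q
      using that r \<open>U = - cball c r\<close> by (simp add: dist_norm)
  qed (use that \<open>U = - cball c r\<close> in \<open>auto simp: dist_norm norm_minus_commute\<close>)
qed

text \<open>Pull the disc \<open>cball x0 \<delta>\<close> radially towards its centre, the inner half all the way,
  and compose with the retraction \<open>R\<close> to stay inside \<open>X\<close>.\<close>
lemma retraction_collapse_homotopy:
  fixes X :: "'a::real_normed_vector set"
  assumes "\<delta> > 0" "x0 \<in> X" and R_cont: "continuous_on (cball x0 \<delta>) R"
    and R_into: "R ` cball x0 \<delta> \<subseteq> X \<inter> K" and R_fix: "\<And>q. q \<in> X \<inter> cball x0 \<delta> \<Longrightarrow> R q = q"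
  obtains Q :: "real \<times> 'a \<Rightarrow> 'a" where "continuous_on ({0..1} \<times> X) Q"
    "\<And>t p. t \<in> {0..1} \<Longrightarrow> p \<in> X \<Longrightarrow> Q (t,p) \<in> X"
    "\<And>p. p \<in> X \<Longrightarrow> Q (0,p) = p"
    "\<And>t p. t \<in> {0..1} \<Longrightarrow> p \<in> X \<Longrightarrow> p \<notin> ball x0 \<delta> \<Longrightarrow> Q (t,p) = p"
    "\<And>t p. t \<in> {0..1} \<Longrightarrow> p \<in> cball x0 \<delta> \<Longrightarrow> Q (t,p) \<in> K"
    "\<And>p. p \<in> cball x0 (\<delta>/2) \<Longrightarrow> Q (1,p) = x0"
proof -
  define weight where "weight p = min 1 (max 0 (2 - 2 * dist p x0 / \<delta>))" for p
  define shrink where "shrink z = x0 + (1 - fst z * weight (snd z)) *\<^sub>R (snd z - x0)"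
    for z :: "real \<times> 'a"
  define Q where "Q z = (if dist (snd z) x0 \<le> \<delta> then R (shrink z) else snd z)" for z
  have shrink_in: "shrink (t,p) \<in> cball x0 \<delta>" if "t \<in> {0..1}" "dist p x0 \<le> \<delta>" for t p
  proof -
    have "0 \<le> t * weight p" "t * weight p \<le> 1"
      using that(1) by (auto simp: weight_def intro: mult_le_one)
    then have "\<bar>1 - t * weight p\<bar> * dist p x0 \<le> 1 * \<delta>"
      using that(2) by (intro mult_mono) auto
    then show ?thesis
      by (simp add: shrink_def dist_norm)
  qed
  have shrink_cont: "continuous_on ({0..1} \<times> X) shrink"
    unfolding shrink_def weight_def by (intro continuous_intros) (use \<open>\<delta> > 0\<close> in auto)
  have rim: "weight p = 0" if "dist p x0 = \<delta>" for p
    using that \<open>\<delta> > 0\<close> by (simp add: weight_def)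
  show ?thesis
  proof (rule that)
    show "continuous_on ({0..1} \<times> X) Q"
      unfolding Q_def
    proof (rule continuous_on_cases_le)
      show "continuous_on {z \<in> {0..1} \<times> X. dist (snd z) x0 \<le> \<delta>} (\<lambda>z. R (shrink z))"
        using shrink_in
        by (intro continuous_on_compose2[OF R_cont continuous_on_subset[OF shrink_cont]]) auto
      show "R (shrink z) = snd z" if "z \<in> {0..1} \<times> X" "dist (snd z) x0 = \<delta>" for z
        using that rim R_fix by (auto simp: shrink_def dist_commute)
      show "continuous_on {z \<in> {0..1} \<times> X. \<delta> \<le> dist (snd z) x0} snd"
        by (intro continuous_intros)
      show "continuous_on ({0..1} \<times> X) (\<lambda>z. dist (snd z) x0)"
        by (intro continuous_intros)
    qed
    show "Q (t,p) \<in> X" if "t \<in> {0..1}" "p \<in> X" for t p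
      using shrink_in R_into that by (auto simp: Q_def)
    show "Q (0,p) = p" if "p \<in> X" for p
      using R_fix that by (simp add: Q_def shrink_def dist_commute)
    show "Q (t,p) = p" if "t \<in> {0..1}" "p \<in> X" "p \<notin> ball x0 \<delta>" for t p
      using that rim R_fix by (auto simp: Q_def shrink_def dist_commute)
    show "Q (t,p) \<in> K" if "t \<in> {0..1}" "p \<in> cball x0 \<delta>" for t p
      using shrink_in R_into that by (auto simp: Q_def dist_commute)
    show "Q (1,p) = x0" if "p \<in> cball x0 (\<delta>/2)" for p
    proof -
      have "weight p = 1"
        using that \<open>\<delta> > 0\<close> by (simp add: weight_def dist_commute field_simps)
      then show ?thesis
        using that R_fix \<open>x0 \<in> X\<close> \<open>\<delta> > 0\<close> by (simp add: Q_def shrink_def dist_commute)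
    qed
  qed
qed

lemma continuous_on_homotopy_join:
  fixes A B :: "real \<times> 'a::topological_space \<Rightarrow> 'b::topological_space"
  assumes A: "continuous_on ({0..1} \<times> X) A" and B: "continuous_on ({0..1} \<times> X) B"
    and meet: "\<And>p. p \<in> X \<Longrightarrow> A (1,p) = B (0,p)"
  shows "continuous_on ({0..1} \<times> X)
    (\<lambda>z. if fst z \<le> 1/2 then A (2 * fst z, snd z) else B (2 * fst z - 1, snd z))"
proof (rule continuous_on_cases_le)
  show "continuous_on {z \<in> {0..1} \<times> X. fst z \<le> 1/2} (\<lambda>z. A (2 * fst z, snd z))"
    by (rule continuous_on_compose2[OF A]) (auto intro!: continuous_intros)
  show "continuous_on {z \<in> {0..1} \<times> X. 1/2 \<le> fst z} (\<lambda>z. B (2 * fst z - 1, snd z))"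
    by (rule continuous_on_compose2[OF B]) (auto intro!: continuous_intros)
  show "A (2 * fst z, snd z) = B (2 * fst z - 1, snd z)" if "z \<in> {0..1} \<times> X" "fst z = 1/2" for z
  proof -
    have "2 * fst z = 1" "2 * fst z - 1 = 0"
      using that(2) by simp_all
    then show ?thesis
      using meet[of "snd z"] that(1) by (simp add: mem_Times_iff)
  qed
qed (intro continuous_intros)

lemma fading_factor_in_unit_interval:
  fixes s d \<delta> :: real
  assumes "s \<in> {0..1}" "0 \<le> d" "d \<le> \<delta>/2" "\<delta> > 0"
  shows "s * (1 - 2 * d / \<delta>) \<in> {0..1}"
proof -
  have "0 \<le> 1 - 2 * d / \<delta>" "1 - 2 * d / \<delta> \<le> 1"
    using assms(2-4) by (simp_all add: field_simps)
  then show ?thesis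
    using assms(1) by (auto intro: mult_le_one)
qed

lemma continuous_on_sweep_path_on_disc:
  fixes g :: "'a::metric_space \<Rightarrow> 'b::topological_space"
  assumes g: "continuous_on X g" and "\<delta> > 0" and \<gamma>: "path \<gamma>"
    and rim: "\<And>p. p \<in> X \<Longrightarrow> dist p x0 = \<delta>/2 \<Longrightarrow> g p = pathstart \<gamma>"
  shows "continuous_on ({0..1} \<times> X) (\<lambda>z. if dist (snd z) x0 \<le> \<delta>/2
    then \<gamma> (fst z * (1 - 2 * dist (snd z) x0 / \<delta>)) else g (snd z))"
proof (rule continuous_on_cases_le)
  have "continuous_on {0..1} \<gamma>"
    using \<gamma> by (simp add: path_def)
  moreover have "fst z * (1 - 2 * dist (snd z) x0 / \<delta>) \<in> {0..1}"
    if "z \<in> {0..1} \<times> X" "dist (snd z) x0 \<le> \<delta>/2" for z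
    using that \<open>\<delta> > 0\<close> by (intro fading_factor_in_unit_interval) auto
  ultimately show "continuous_on {z \<in> {0..1} \<times> X. dist (snd z) x0 \<le> \<delta>/2}
      (\<lambda>z. \<gamma> (fst z * (1 - 2 * dist (snd z) x0 / \<delta>)))"
    using \<open>\<delta> > 0\<close> by (auto intro!: continuous_on_compose2[of "{0..1}" \<gamma>] continuous_intros)
  show "continuous_on {z \<in> {0..1} \<times> X. \<delta>/2 \<le> dist (snd z) x0} (\<lambda>z. g (snd z))"
    by (rule continuous_on_compose2[OF g]) (auto intro!: continuous_intros)
  show "\<gamma> (fst z * (1 - 2 * dist (snd z) x0 / \<delta>)) = g (snd z)"
    if "z \<in> {0..1} \<times> X" "dist (snd z) x0 = \<delta>/2" for z
    using that rim \<open>\<delta> > 0\<close> by (auto simp: pathstart_def)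
qed (intro continuous_intros)

text \<open>First collapse the inner half of the disc onto \<open>x0\<close>, then sweep \<open>\<gamma>\<close> over it.\<close>
lemma homotopy_moving_point_along_path:
  fixes f :: "'a::real_normed_vector \<Rightarrow> 'b::topological_space"
  assumes f_cont: "continuous_on X f" and "x0 \<in> X" "\<delta> > 0"
    and "continuous_on (cball x0 \<delta>) R" "R ` cball x0 \<delta> \<subseteq> X \<inter> K"
    "\<And>q. q \<in> X \<inter> cball x0 \<delta> \<Longrightarrow> R q = q"
    and \<gamma>: "path \<gamma>" "pathstart \<gamma> = f x0" "pathfinish \<gamma> = y"
  obtains H :: "real \<times> 'a \<Rightarrow> 'b" where "continuous_on ({0..1} \<times> X) H"
    "\<And>p. p \<in> X \<Longrightarrow> H (0,p) = f p"
    "\<And>t p. t \<in> {0..1} \<Longrightarrow> p \<in> X \<Longrightarrow> p \<notin> ball x0 \<delta> \<Longrightarrow> H (t,p) = f p"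
    "H (1, x0) = y"
    "\<And>t p. t \<in> {0..1} \<Longrightarrow> p \<in> X \<Longrightarrow>
        H (t,p) = f p \<or> p \<in> cball x0 \<delta> \<and> H (t,p) \<in> f ` (X \<inter> K) \<union> path_image \<gamma>"
proof -
  obtain Q :: "real \<times> 'a \<Rightarrow> 'a" where Q: "continuous_on ({0..1} \<times> X) Q"
    "\<And>t p. t \<in> {0..1} \<Longrightarrow> p \<in> X \<Longrightarrow> Q (t,p) \<in> X"
    "\<And>p. p \<in> X \<Longrightarrow> Q (0,p) = p"
    "\<And>t p. t \<in> {0..1} \<Longrightarrow> p \<in> X \<Longrightarrow> p \<notin> ball x0 \<delta> \<Longrightarrow> Q (t,p) = p"
    "\<And>t p. t \<in> {0..1} \<Longrightarrow> p \<in> cball x0 \<delta> \<Longrightarrow> Q (t,p) \<in> K"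
    "\<And>p. p \<in> cball x0 (\<delta>/2) \<Longrightarrow> Q (1,p) = x0"
    using retraction_collapse_homotopy[OF assms(3,2,4-6)] by blast
  define A where "A z = f (Q z)" for z
  define B where "B z = (if dist (snd z) x0 \<le> \<delta>/2
    then \<gamma> (fst z * (1 - 2 * dist (snd z) x0 / \<delta>)) else f (Q (1, snd z)))" for z
  define H where "H z = (if fst z \<le> 1/2 then A (2 * fst z, snd z) else B (2 * fst z - 1, snd z))" for z
  have "continuous_on ({0..1} \<times> X) A"
    unfolding A_def using Q(1,2) by (intro continuous_on_compose2[OF f_cont]) auto
  moreover have "continuous_on X (\<lambda>p. f (Q (1,p)))"
    using Q(1,2) by (intro continuous_on_compose2[OF f_cont] continuous_on_compose2[OF Q(1)]
        continuous_intros) auto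
  then have "continuous_on ({0..1} \<times> X) B"
    unfolding B_def using \<open>\<delta> > 0\<close> \<gamma>(1,2) Q(6)
    by (intro continuous_on_sweep_path_on_disc) (auto simp: dist_commute)
  moreover have "A (1,p) = B (0,p)" if "p \<in> X" for p
    using Q(6)[of p] \<gamma>(2) by (simp add: A_def B_def pathstart_def dist_commute)
  ultimately have "continuous_on ({0..1} \<times> X) H"
    unfolding H_def by (rule continuous_on_homotopy_join)
  show ?thesis
  proof (rule that[OF \<open>continuous_on ({0..1} \<times> X) H\<close>])
    show "H (0,p) = f p" if "p \<in> X" for p
      using Q(3) that by (simp add: H_def A_def)
    show "H (t,p) = f p" if "t \<in> {0..1}" "p \<in> X" "p \<notin> ball x0 \<delta>" for t p
      using Q(4) that \<open>\<delta> > 0\<close> by (auto simp: H_def A_def B_def dist_commute)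
    show "H (1, x0) = y"
      using \<gamma>(3) \<open>\<delta> > 0\<close> by (simp add: H_def B_def pathfinish_def)
    show "H (t,p) = f p \<or> p \<in> cball x0 \<delta> \<and> H (t,p) \<in> f ` (X \<inter> K) \<union> path_image \<gamma>"
      if "t \<in> {0..1}" "p \<in> X" for t p
    proof (cases "p \<in> ball x0 \<delta>")
      case True
      have "(2 * t - 1) * (1 - 2 * dist p x0 / \<delta>) \<in> {0..1}"
        if "\<not> t \<le> 1/2" "dist p x0 \<le> \<delta>/2"
        using that \<open>t \<in> {0..1}\<close> \<open>\<delta> > 0\<close> by (intro fading_factor_in_unit_interval) auto
      then show ?thesis
        using True Q(2,5) that by (auto simp: H_def A_def B_def path_image_def dist_commute)
    qed (use Q(4) that \<open>\<delta> > 0\<close> in \<open>auto simp: H_def A_def B_def dist_commute\<close>)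
  qed
qed

text \<open>Only finitely many of the homotopies move points by more than a given amount; near \<open>z0\<close>
  these are controlled by their own continuity, the others by continuity of \<open>f\<close>.\<close>
lemma paste_disjoint_supports_continuous_outside:
  fixes f :: "'a::metric_space \<Rightarrow> 'b::metric_space" and H :: "nat \<Rightarrow> real \<times> 'a \<Rightarrow> 'b"
  assumes f_cont: "continuous_on X f"
    and H_cont: "\<And>n. continuous_on ({0..1} \<times> X) (H n)"
    and H_out: "\<And>n t p. t \<in> {0..1} \<Longrightarrow> p \<in> X \<Longrightarrow> p \<notin> S n \<Longrightarrow> H n (t,p) = f p"
    and H_near: "\<And>n t p. t \<in> {0..1} \<Longrightarrow> p \<in> X \<Longrightarrow> dist (H n (t,p)) (f p) \<le> \<omega> n"
    and \<omega>: "\<omega> \<longlonglongrightarrow> 0"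
    and K_in: "\<And>n z. snd z \<in> S n \<Longrightarrow> K z = H n z"
    and K_out: "\<And>z. (\<And>n. snd z \<notin> S n) \<Longrightarrow> K z = f (snd z)"
    and z0: "z0 = (t0,p0)" "t0 \<in> {0..1}" "p0 \<in> X" "\<And>n. p0 \<notin> S n" and "e > 0"
  shows "\<exists>d>0. \<forall>z\<in>{0..1} \<times> X. dist z z0 < d \<longrightarrow> dist (K z) (K z0) < e"
proof -
  have K0: "K z0 = f p0"
    using K_out z0 by auto
  obtain N where N: "\<And>n. n \<ge> N \<Longrightarrow> \<omega> n < e/2"
    using \<omega> \<open>e > 0\<close> unfolding LIMSEQ_def by (metis dist_real_def diff_zero abs_less_iff half_gt_zero)
  obtain df where "df > 0" and df: "\<forall>p\<in>X. dist p p0 < df \<longrightarrow> dist (f p) (f p0) < e/2"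
    using f_cont z0 \<open>e > 0\<close> unfolding continuous_on_iff by (meson half_gt_zero)
  have "z0 \<in> {0..1} \<times> X"
    using z0 by simp
  then have "\<exists>d>0. \<forall>z\<in>{0..1} \<times> X. dist z z0 < d \<longrightarrow> dist (H n z) (H n z0) < e" for n
    using H_cont \<open>e > 0\<close> unfolding continuous_on_iff by blast
  then obtain dd where dd: "\<And>n. dd n > 0"
    "\<And>n z. z \<in> {0..1} \<times> X \<Longrightarrow> dist z z0 < dd n \<Longrightarrow> dist (H n z) (H n z0) < e"
    by metis
  define d where "d = Min (insert df (dd ` {..<N}))"
  have "d > 0" "d \<le> df" and d_dd: "\<And>n. n < N \<Longrightarrow> d \<le> dd n"
    using \<open>df > 0\<close> dd(1) by (auto simp: d_def)
  have "dist (K z) (K z0) < e" if z: "z \<in> {0..1} \<times> X" "dist z z0 < d" for z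
  proof -
    obtain t p where z_eq: "z = (t,p)" "t \<in> {0..1}" "p \<in> X"
      using z(1) by auto
    have f_close: "dist (f p) (f p0) < e/2"
      using df dist_snd_le[of z z0] z(2) \<open>d \<le> df\<close> z_eq z0 by fastforce
    show ?thesis
    proof (cases "\<exists>k. p \<in> S k")
      case True
      then obtain k where k: "p \<in> S k" and Kz: "K z = H k z"
        using K_in z_eq by auto
      show ?thesis
      proof (cases "k < N")
        case True
        have "H k z0 = f p0"
          using H_out z0 by auto
        then show ?thesis
          using dd(2)[OF z(1), of k] z(2) d_dd[OF True] Kz K0 by simp
      next
        case False
        have "dist (H k z) (f p0) \<le> dist (H k z) (f p) + dist (f p) (f p0)"
          by (rule dist_triangle)
        also have "\<dots> < e"
          using H_near[OF z_eq(2,3), of k] N[of k] False f_close z_eq by simp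
        finally show ?thesis
          using Kz K0 by simp
      qed
    next
      case False
      then show ?thesis
        using K_out[of z] K0 f_close \<open>e > 0\<close> z_eq by auto
    qed
  qed
  then show ?thesis
    using \<open>d > 0\<close> by blast
qed

lemma continuous_on_paste_disjoint_supports:
  fixes f :: "'a::metric_space \<Rightarrow> 'b::metric_space" and H :: "nat \<Rightarrow> real \<times> 'a \<Rightarrow> 'b"
  assumes f_cont: "continuous_on X f"
    and H_cont: "\<And>n. continuous_on ({0..1} \<times> X) (H n)"
    and S_open: "\<And>n. open (S n)"
    and H_out: "\<And>n t p. t \<in> {0..1} \<Longrightarrow> p \<in> X \<Longrightarrow> p \<notin> S n \<Longrightarrow> H n (t,p) = f p"
    and H_near: "\<And>n t p. t \<in> {0..1} \<Longrightarrow> p \<in> X \<Longrightarrow> dist (H n (t,p)) (f p) \<le> \<omega> n"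
    and \<omega>: "\<omega> \<longlonglongrightarrow> 0"
    and K_in: "\<And>n z. snd z \<in> S n \<Longrightarrow> K z = H n z"
    and K_out: "\<And>z. (\<And>n. snd z \<notin> S n) \<Longrightarrow> K z = f (snd z)"
  shows "continuous_on ({0..1} \<times> X) K"
  unfolding continuous_on_iff
proof (intro ballI allI impI)
  fix z0 :: "real \<times> 'a" and e :: real
  assume z0: "z0 \<in> {0..1} \<times> X" and "e > 0"
  show "\<exists>d>0. \<forall>z\<in>{0..1} \<times> X. dist z z0 < d \<longrightarrow> dist (K z) (K z0) < e"
  proof (cases "\<exists>m. snd z0 \<in> S m")
    case True
    then obtain m where m: "snd z0 \<in> S m"
      by blast
    obtain d1 where "d1 > 0" "ball (snd z0) d1 \<subseteq> S m"
      using S_open m open_contains_ball by blast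
    obtain d2 where "d2 > 0" and d2: "\<forall>z\<in>{0..1} \<times> X. dist z z0 < d2 \<longrightarrow> dist (H m z) (H m z0) < e"
      using H_cont z0 \<open>e > 0\<close> unfolding continuous_on_iff by blast
    have "dist (K z) (K z0) < e" if "z \<in> {0..1} \<times> X" "dist z z0 < min d1 d2" for z
    proof -
      have "snd z \<in> S m"
        using dist_snd_le[of z z0] that(2) \<open>ball (snd z0) d1 \<subseteq> S m\<close> by (auto simp: dist_commute)
      then show ?thesis
        using K_in m d2 that by auto
    qed
    then show ?thesis
      using \<open>d1 > 0\<close> \<open>d2 > 0\<close> by (metis min_less_iff_conj)
  next
    case False
    show ?thesis
      by (rule paste_disjoint_supports_continuous_outside[OF f_cont H_cont H_out H_near \<omega> K_in K_out
            prod.collapse[symmetric]]) (use z0 False \<open>e > 0\<close> in auto)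
  qed
qed

lemma homotopic_paste_disjoint_supports:
  fixes f :: "'a::metric_space \<Rightarrow> 'b::metric_space" and H :: "nat \<Rightarrow> real \<times> 'a \<Rightarrow> 'b"
  assumes f_cont: "continuous_on X f"
    and H_cont: "\<And>n. continuous_on ({0..1} \<times> X) (H n)"
    and H_start: "\<And>n p. p \<in> X \<Longrightarrow> H n (0,p) = f p"
    and S_open: "\<And>n. open (S n)" and S_disj: "\<And>m n. m \<noteq> n \<Longrightarrow> S m \<inter> S n = {}"
    and H_out: "\<And>n t p. t \<in> {0..1} \<Longrightarrow> p \<in> X \<Longrightarrow> p \<notin> S n \<Longrightarrow> H n (t,p) = f p"
    and H_near: "\<And>n t p. t \<in> {0..1} \<Longrightarrow> p \<in> X \<Longrightarrow> dist (H n (t,p)) (f p) \<le> \<omega> n"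
    and \<omega>: "\<omega> \<longlonglongrightarrow> 0"
  shows "\<exists>g. continuous_on X g \<and> homotopic_with_canon (\<lambda>_. True) X UNIV f g \<and>
    (\<forall>n. \<forall>p\<in>S n. g p = H n (1,p))"
proof -
  define K where "K z = (if \<exists>n. snd z \<in> S n then H (SOME n. snd z \<in> S n) z else f (snd z))" for z
  have K_in: "K z = H n z" if "snd z \<in> S n" for n z
  proof -
    have "(SOME n. snd z \<in> S n) = n"
      using S_disj that by (metis disjoint_iff someI)
    then show ?thesis
      using that by (auto simp: K_def)
  qed
  have K_out: "K z = f (snd z)" if "\<And>n. snd z \<notin> S n" for z
    using that by (auto simp: K_def)
  have K_cont: "continuous_on ({0..1} \<times> X) K"
    by (rule continuous_on_paste_disjoint_supports[OF f_cont H_cont S_open H_out H_near \<omega> K_in K_out])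
  have K_start: "K (0,p) = f p" if "p \<in> X" for p
    using K_in[of "(0,p)"] K_out[of "(0,p)"] H_start that by fastforce
  show ?thesis
  proof (intro exI conjI allI ballI)
    show "continuous_on X (\<lambda>p. K (1,p))"
      by (rule continuous_on_compose2[OF K_cont]) (auto intro: continuous_intros)
    define h where "h z = (if fst z = 0 then f (snd z) else K z)" for z
    have "continuous_on ({0..1} \<times> X) h"
      using K_cont by (rule continuous_on_eq) (auto simp: h_def K_start)
    then show "homotopic_with_canon (\<lambda>_. True) X UNIV f (\<lambda>p. K (1,p))"
      unfolding homotopic_with_def by (intro exI[of _ h]) (auto simp: h_def)
    show "K (1,p) = H n (1,p)" if "p \<in> S n" for n p
      using K_in that by simp
  qed
qed

lemma compact_locally_path_connected_uniform_paths:
  fixes L :: "'a::metric_space set"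
  assumes "compact L" "locally path_connected L" "e > 0"
  shows "\<exists>d>0. \<forall>u\<in>L. \<forall>v\<in>L. dist u v < d \<longrightarrow>
    (\<exists>\<gamma>. path \<gamma> \<and> pathstart \<gamma> = u \<and> pathfinish \<gamma> = v \<and> path_image \<gamma> \<subseteq> ball u e)"
proof -
  define G where "G = {T. open T \<and> (\<exists>w V. path_connected V \<and> L \<inter> T \<subseteq> V \<and> V \<subseteq> ball w (e/2))}"
  have cover: "L \<subseteq> \<Union>G"
  proof
    fix w assume "w \<in> L"
    have "openin (top_of_set L) (L \<inter> ball w (e/2))" and w: "w \<in> L \<inter> ball w (e/2)"
      using \<open>w \<in> L\<close> \<open>e > 0\<close> by (auto simp: openin_open_Int)
    then obtain U V where UV: "openin (top_of_set L) U" "path_connected V" "w \<in> U" "U \<subseteq> V"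
      "V \<subseteq> L \<inter> ball w (e/2)"
      using assms(2)[unfolded locally_def, rule_format, OF conjI[OF _ w]] by blast
    then obtain T where T: "open T" "U = L \<inter> T"
      by (auto simp: openin_open)
    then have "T \<in> G"
      unfolding G_def using UV by blast
    then show "w \<in> \<Union>G"
      using T UV(3) by blast
  qed
  have G_open: "\<And>T. T \<in> G \<Longrightarrow> open T"
    by (simp add: G_def)
  obtain d where "d > 0" and d: "\<And>u. u \<in> L \<Longrightarrow> \<exists>T\<in>G. ball u d \<subseteq> T"
    using Heine_Borel_lemma[OF assms(1) cover G_open] by blast
  have "\<exists>\<gamma>. path \<gamma> \<and> pathstart \<gamma> = u \<and> pathfinish \<gamma> = v \<and> path_image \<gamma> \<subseteq> ball u e"
    if "u \<in> L" "v \<in> L" "dist u v < d" for u v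
  proof -
    obtain T where "T \<in> G" "ball u d \<subseteq> T"
      using d \<open>u \<in> L\<close> by blast
    then obtain w V where V: "path_connected V" "L \<inter> T \<subseteq> V" "V \<subseteq> ball w (e/2)"
      by (auto simp: G_def)
    have "u \<in> ball u d" "v \<in> ball u d"
      using \<open>d > 0\<close> \<open>dist u v < d\<close> by auto
    then have "u \<in> V" "v \<in> V"
      using \<open>ball u d \<subseteq> T\<close> V(2) \<open>u \<in> L\<close> \<open>v \<in> L\<close> by blast+
    then obtain \<gamma> where "path \<gamma>" "path_image \<gamma> \<subseteq> V" "pathstart \<gamma> = u" "pathfinish \<gamma> = v"
      using V(1) unfolding path_connected_def by blast
    moreover have "V \<subseteq> ball u e"
    proof
      fix p assume "p \<in> V"
      then have "dist w p < e/2" "dist w u < e/2"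
        using V(3) \<open>u \<in> V\<close> by auto
      then show "p \<in> ball u e"
        using dist_triangle[of u p w] by (simp add: dist_commute)
    qed
    ultimately show ?thesis
      by blast
  qed
  then show ?thesis
    using \<open>d > 0\<close> by blast
qed

lemma Inf_admissible_tendsto_0:
  fixes P :: "nat \<Rightarrow> real \<Rightarrow> bool"
  assumes ex: "\<And>n. \<exists>e. P n e" and pos: "\<And>n e. P n e \<Longrightarrow> e > 0"
    and eventually_admissible: "\<And>e. e > 0 \<Longrightarrow> \<forall>\<^sub>F n in sequentially. P n e"
  shows "(\<lambda>n. Inf {e. P n e}) \<longlonglongrightarrow> 0"
proof (rule order_tendstoI)
  have bdd: "bdd_below {e. P n e}" for n
    using pos by (auto intro!: bdd_belowI[of _ 0] less_imp_le)
  have "Inf {e. P n e} \<ge> 0" for n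
    using ex[of n] pos by (metis (mono_tags, lifting) cInf_greatest empty_Collect_eq less_imp_le mem_Collect_eq)
  then show "\<forall>\<^sub>F n in sequentially. a < Inf {e. P n e}" if "a < 0" for a
    using that by (intro always_eventually allI) (auto intro: less_le_trans)
  show "\<forall>\<^sub>F n in sequentially. Inf {e. P n e} < a" if "0 < a" for a
  proof (rule eventually_mono)
    show "\<forall>\<^sub>F n in sequentially. P n (a/2)"
      using that by (intro eventually_admissible) simp
    fix n assume "P n (a/2)"
    then have "Inf {e. P n e} \<le> a/2"
      using bdd by (intro cInf_lower) auto
    then show "Inf {e. P n e} < a"
      using that by linarith
  qed
qed

text \<open>Adding \<open>1/(n+1)\<close> to the infimum makes it admissible.\<close>
lemma vanishing_admissible_bounds:
  fixes P :: "nat \<Rightarrow> real \<Rightarrow> bool"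
  assumes ex: "\<And>n. \<exists>e. P n e" and mono: "\<And>n e e'. P n e \<Longrightarrow> e \<le> e' \<Longrightarrow> P n e'"
    and pos: "\<And>n e. P n e \<Longrightarrow> e > 0"
    and eventually_admissible: "\<And>e. e > 0 \<Longrightarrow> \<forall>\<^sub>F n in sequentially. P n e"
  shows "\<exists>E. (\<forall>n. P n (E n)) \<and> E \<longlonglongrightarrow> 0"
proof -
  define E where "E n = Inf {e. P n e} + inverse (real (Suc n))" for n
  have "P n (E n)" for n
  proof -
    have "Inf {e. P n e} < E n"
      by (simp add: E_def)
    then obtain e where "P n e" "e < E n"
      using ex[of n] by (metis cInf_lessD empty_Collect_eq mem_Collect_eq)
    then show ?thesis
      using mono by auto
  qed
  moreover have "(\<lambda>n. Inf {e. P n e}) \<longlonglongrightarrow> 0"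
    using ex pos eventually_admissible by (rule Inf_admissible_tendsto_0)
  then have "E \<longlonglongrightarrow> 0"
    unfolding E_def using tendsto_add[OF _ LIMSEQ_inverse_real_of_nat] by simp
  ultimately show ?thesis
    by blast
qed

lemma compact_locally_path_connected_continuous_image:
  fixes f :: "'a::metric_space \<Rightarrow> 'b::metric_space"
  assumes "compact X" "connected X" "locally path_connected X" "continuous_on X f"
  shows "compact (f ` X)" "path_connected (f ` X)" "locally path_connected (f ` X)"
proof -
  show "compact (f ` X)"
    by (rule compact_continuous_image[OF assms(4,1)])
  have "path_connected X"
    using assms(2,3) by (metis connected_component_eq_self path_component_eq_connected_component_set
        path_connected_component_set)
  then show "path_connected (f ` X)"
    by (rule path_connected_continuous_image[OF assms(4)])
  show "locally path_connected (f ` X)"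
    by (rule locally_path_connected_quotient_image[OF assms(3)])
      (rule Abstract_Topology_2.continuous_imp_quotient_map[OF assms(4) refl assms(1)], assumption)
qed

lemma path_connected_bounded_path_in_ball:
  fixes L :: "'a::metric_space set"
  assumes "path_connected L" "bounded L" "u \<in> L" "v \<in> L"
  shows "\<exists>e \<gamma>. path \<gamma> \<and> pathstart \<gamma> = u \<and> pathfinish \<gamma> = v \<and> path_image \<gamma> \<subseteq> ball u e"
proof -
  obtain \<gamma> where "path \<gamma>" "path_image \<gamma> \<subseteq> L" "pathstart \<gamma> = u" "pathfinish \<gamma> = v"
    using assms(1,3,4) unfolding path_connected_def by blast
  moreover obtain B where "\<forall>w\<in>L. dist u w \<le> B"
    using assms(2) bounded_any_center by blast
  ultimately have "path_image \<gamma> \<subseteq> ball u (B + 1)"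
    by force
  with \<open>path \<gamma>\<close> \<open>pathstart \<gamma> = u\<close> \<open>pathfinish \<gamma> = v\<close> show ?thesis
    by blast
qed

lemma paths_to_nearby_values_vanishing:
  fixes f :: "'a::metric_space \<Rightarrow> 'b::metric_space"
  assumes X: "compact X" "connected X" "locally path_connected X" and f_cont: "continuous_on X f"
    and x: "\<And>n. x n \<in> X" and y: "\<And>n. y n \<in> f ` X"
    and close: "(\<lambda>n. dist (f (x n)) (y n)) \<longlonglongrightarrow> 0"
  obtains \<gamma> E where "\<And>n. path (\<gamma> n)" "\<And>n. pathstart (\<gamma> n) = f (x n)"
    "\<And>n. pathfinish (\<gamma> n) = y n" "\<And>n. path_image (\<gamma> n) \<subseteq> ball (f (x n)) (E n)" "E \<longlonglongrightarrow> 0"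
proof -
  define P where "P n e \<longleftrightarrow> (\<exists>\<gamma>. path \<gamma> \<and> pathstart \<gamma> = f (x n) \<and> pathfinish \<gamma> = y n \<and>
    path_image \<gamma> \<subseteq> ball (f (x n)) e)" for n e
  have "compact (f ` X)" "path_connected (f ` X)" "locally path_connected (f ` X)"
    using compact_locally_path_connected_continuous_image[OF X f_cont] by auto
  have "\<exists>E. (\<forall>n. P n (E n)) \<and> E \<longlonglongrightarrow> 0"
  proof (rule vanishing_admissible_bounds)
    show "\<exists>e. P n e" for n
    proof -
      have "f (x n) \<in> f ` X"
        using x by blast
      then show ?thesis
        using path_connected_bounded_path_in_ball[OF \<open>path_connected (f ` X)\<close>
            compact_imp_bounded[OF \<open>compact (f ` X)\<close>] _ y[of n]]
        unfolding P_def by blast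
    qed
    show "P n e'" if "P n e" "e \<le> e'" for n e e'
    proof -
      have "ball (f (x n)) e \<subseteq> ball (f (x n)) e'"
        using that(2) by auto
      then show ?thesis
        using that(1) unfolding P_def by (meson order_trans)
    qed
    show "e > 0" if "P n e" for n e
      using that unfolding P_def by (metis centre_in_ball pathstart_in_path_image subsetD)
    show "\<forall>\<^sub>F n in sequentially. P n e" if e: "e > 0" for e
    proof -
      obtain d where "d > 0" and d: "\<forall>u\<in>f ` X. \<forall>v\<in>f ` X. dist u v < d \<longrightarrow>
        (\<exists>\<gamma>. path \<gamma> \<and> pathstart \<gamma> = u \<and> pathfinish \<gamma> = v \<and> path_image \<gamma> \<subseteq> ball u e)"
        using compact_locally_path_connected_uniform_paths[OF \<open>compact (f ` X)\<close>
            \<open>locally path_connected (f ` X)\<close> e] by blast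
      have "\<forall>\<^sub>F n in sequentially. dist (f (x n)) (y n) < d"
        using order_tendstoD(2)[OF close \<open>d > 0\<close>] .
      then show ?thesis
      proof (rule eventually_mono)
        fix n assume "dist (f (x n)) (y n) < d"
        moreover have "f (x n) \<in> f ` X"
          using x by blast
        ultimately show "P n e"
          using d y[of n] unfolding P_def by blast
      qed
    qed
  qed
  then show ?thesis
    using that unfolding P_def by metis
qed

lemma standard_peano_continuumD:
  assumes "standard_peano_continuum X"
  shows "compact X" "closed X" "connected X" "locally path_connected X" "interior X \<noteq> {}"
  using assms compact_imp_closed
  by (auto simp: standard_peano_continuum_def two_dim_peano_continuum_def peano_continuum_def)

lemma isolated_boundary_circleE:
  assumes "standard_peano_continuum X" "C \<in> isolated_boundary_circles X"
  obtains U c r where "U \<in> components (- X)" "C = frontier U" "C = sphere c r" "r > 0"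
    "openin (top_of_set (Fr X)) C"
  using assms
  by (auto simp: standard_peano_continuum_def isolated_boundary_circles_def round_circle_def)

lemma isolated_boundary_circle_subset_Fr:
  assumes "standard_peano_continuum X" "C \<in> isolated_boundary_circles X"
  shows "C \<subseteq> Fr X"
  using assms by (metis isolated_boundary_circleE openin_imp_subset)

text \<open>Every component of the complement is bounded by a circle which is isolated in the frontier,
  so a point of the complement near a boundary circle would lie in a component whose circle shares an
  arc with it, hence coincides with it; but two components bounded by one circle leave no room for
  the interior of \<open>X\<close>.\<close>
lemma standard_peano_continuum_near_boundary_circle:
  assumes std: "standard_peano_continuum X" and U: "U \<in> components (- X)" and x: "x \<in> frontier U"
  obtains \<eta> where "\<eta> > 0" "\<And>q. q \<in> cball x \<eta> \<Longrightarrow> q \<notin> U \<Longrightarrow> q \<in> X"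
proof -
  have circle: "frontier U \<in> isolated_boundary_circles X"
    using U by (auto simp: isolated_boundary_circles_def)
  then obtain c r where "frontier U = sphere c r" "r > 0" and "openin (top_of_set (Fr X)) (frontier U)"
    using std by (metis isolated_boundary_circleE)
  then obtain \<eta> where "\<eta> > 0" and \<eta>: "ball x \<eta> \<inter> Fr X \<subseteq> sphere c r"
    using x by (metis openin_contains_ball)
  have "q \<in> X" if q: "q \<in> cball x (\<eta>/2)" "q \<notin> U" for q
  proof (rule ccontr)
    assume "q \<notin> X"
    define V where "V = connected_component_set (- X) q"
    have V: "V \<in> components (- X)" "q \<in> V" "V \<subseteq> - X"
      using \<open>q \<notin> X\<close> by (auto simp: V_def components_iff connected_component_subset)
    then have "frontier V \<in> isolated_boundary_circles X"
      by (auto simp: isolated_boundary_circles_def)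
    then obtain c' r' where c': "frontier V = sphere c' r'" "r' > 0" "frontier V \<subseteq> Fr X"
      using std isolated_boundary_circle_subset_Fr by (metis isolated_boundary_circleE)
    have "x \<in> X"
      using x circle std isolated_boundary_circle_subset_Fr by (fastforce simp: Fr_def)
    then have "closed_segment q x \<inter> frontier V \<noteq> {}"
      using V by (intro connected_Int_frontier) auto
    then obtain z where z: "z \<in> closed_segment q x" "z \<in> sphere c' r'"
      using c' by blast
    have "dist z x \<le> \<eta>/2"
      using segment_bound(2)[OF z(1)] q(1) by (simp add: dist_norm norm_minus_commute)
    then have "w \<in> ball x \<eta>" if "w \<in> ball z (\<eta>/2)" for w
      using dist_triangle[of x w z] that by (simp add: dist_commute)
    then have "sphere c' r' \<inter> ball z (\<eta>/2) \<subseteq> ball x \<eta> \<inter> Fr X"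
      using c' by blast
    then have arc: "sphere c' r' \<inter> ball z (\<eta>/2) \<subseteq> sphere c r"
      using \<eta> by blast
    then have "c = c'"
      using \<open>\<eta> > 0\<close> by (intro sphere_centre_eq_if_arc_subset[OF \<open>r' > 0\<close> _ z(2)]) auto
    moreover have "z \<in> sphere c r"
      using arc z(2) \<open>\<eta> > 0\<close> by auto
    ultimately have "frontier V = frontier U"
      using z(2) c' \<open>frontier U = sphere c r\<close> by simp
    then have "X \<subseteq> sphere c r"
      using components_common_sphere_frontier[OF _ _ U V(1), of c r] V(2) q(2) \<open>r > 0\<close>
        \<open>frontier U = sphere c r\<close> standard_peano_continuumD(2)[OF std]
      by fastforce
    then show False
      using interior_mono[of X "sphere c r"] interior_sphere_empty[OF \<open>r > 0\<close>]
        standard_peano_continuumD(5)[OF std] by auto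
  qed
  then show ?thesis
    using that \<open>\<eta> > 0\<close> by (meson half_gt_zero)
qed

lemma standard_peano_continuum_local_retraction:
  assumes std: "standard_peano_continuum X" and C: "C \<in> isolated_boundary_circles X" "x \<in> C"
    and "\<epsilon> > 0"
  obtains \<delta> R where "\<delta> > 0" "\<delta> \<le> \<epsilon>" "continuous_on (cball x \<delta>) R"
     "R ` cball x \<delta> \<subseteq> X \<inter> cball x \<epsilon>" "\<And>q. q \<in> X \<inter> cball x \<delta> \<Longrightarrow> R q = q"
proof -
  obtain U c r where U: "U \<in> components (- X)" "C = frontier U" "C = sphere c r" "r > 0"
    using std C by (metis isolated_boundary_circleE)
  obtain \<eta> where "\<eta> > 0" "\<And>q. q \<in> cball x \<eta> \<Longrightarrow> q \<notin> U \<Longrightarrow> q \<in> X"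
    using standard_peano_continuum_near_boundary_circle[OF std U(1)] U(2) C(2) by metis
  moreover have "open (- X)"
    using standard_peano_continuumD(2)[OF std] by (simp add: open_Compl)
  then have "U = ball c r \<or> U = - cball c r"
    using U by (intro component_frontier_sphere_cases) auto
  moreover have "U \<inter> X = {}"
    using in_components_subset[OF U(1)] by blast
  ultimately show ?thesis
    using local_retraction_onto_sphere_side U C(2) \<open>\<epsilon> > 0\<close> that by metis
qed

lemma standard_peano_continuum_point_homotopy:
  fixes f :: "real^2 \<Rightarrow> 'b::metric_space"
  assumes std: "standard_peano_continuum X" and f_cont: "continuous_on X f"
    and C: "C \<in> isolated_boundary_circles X" "x0 \<in> C"
    and \<gamma>: "path \<gamma>" "pathstart \<gamma> = f x0" "pathfinish \<gamma> = y" "path_image \<gamma> \<subseteq> ball (f x0) E"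
    and "r > 0" "\<eta> > 0"
  obtains \<delta> and H :: "real \<times> (real^2) \<Rightarrow> 'b" where "\<delta> > 0" "\<delta> \<le> r" "continuous_on ({0..1} \<times> X) H"
    "\<And>p. p \<in> X \<Longrightarrow> H (0,p) = f p"
    "\<And>t p. t \<in> {0..1} \<Longrightarrow> p \<in> X \<Longrightarrow> p \<notin> ball x0 \<delta> \<Longrightarrow> H (t,p) = f p"
    "H (1, x0) = y"
    "\<And>t p. t \<in> {0..1} \<Longrightarrow> p \<in> X \<Longrightarrow> dist (H (t,p)) (f p) \<le> E + \<eta>"
proof -
  obtain d where "d > 0"
    and d: "\<And>p p'. p \<in> X \<Longrightarrow> p' \<in> X \<Longrightarrow> dist p' p < d \<Longrightarrow> dist (f p') (f p) < \<eta>"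
    using compact_uniformly_continuous[OF f_cont standard_peano_continuumD(1)[OF std]] \<open>\<eta> > 0\<close>
    unfolding uniformly_continuous_on_def by metis
  define \<epsilon> where "\<epsilon> = min r (d/3)"
  have "\<epsilon> > 0"
    using \<open>r > 0\<close> \<open>d > 0\<close> by (simp add: \<epsilon>_def)
  obtain \<delta> R where \<delta>R: "\<delta> > 0" "\<delta> \<le> \<epsilon>" "continuous_on (cball x0 \<delta>) R"
    "R ` cball x0 \<delta> \<subseteq> X \<inter> cball x0 \<epsilon>" "\<And>q. q \<in> X \<inter> cball x0 \<delta> \<Longrightarrow> R q = q"
    using standard_peano_continuum_local_retraction[OF std C \<open>\<epsilon> > 0\<close>] by blast
  have "x0 \<in> X"
    using C std isolated_boundary_circle_subset_Fr by (fastforce simp: Fr_def)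
  obtain H :: "real \<times> (real^2) \<Rightarrow> 'b" where H: "continuous_on ({0..1} \<times> X) H"
    "\<And>p. p \<in> X \<Longrightarrow> H (0,p) = f p"
    "\<And>t p. t \<in> {0..1} \<Longrightarrow> p \<in> X \<Longrightarrow> p \<notin> ball x0 \<delta> \<Longrightarrow> H (t,p) = f p"
    "H (1, x0) = y"
    "\<And>t p. t \<in> {0..1} \<Longrightarrow> p \<in> X \<Longrightarrow>
        H (t,p) = f p \<or> p \<in> cball x0 \<delta> \<and> H (t,p) \<in> f ` (X \<inter> cball x0 \<epsilon>) \<union> path_image \<gamma>"
    using homotopy_moving_point_along_path[OF f_cont \<open>x0 \<in> X\<close> \<delta>R(1,3,4,5) \<gamma>(1-3)] by blast
  have "E > 0"
    using \<gamma>(2,4) pathstart_in_path_image[of \<gamma>] by fastforce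
  have f_near_x0: "dist (f p') (f p) < \<eta>" if "p \<in> X \<inter> cball x0 \<delta>" "p' \<in> X \<inter> cball x0 \<epsilon>" for p p'
  proof -
    have "dist p' p \<le> dist p' x0 + dist x0 p"
      by (rule dist_triangle)
    also have "\<dots> < d"
      using that \<delta>R(2) \<open>d > 0\<close> by (simp add: dist_commute \<epsilon>_def)
    finally show ?thesis
      using d that by blast
  qed
  show ?thesis
  proof (rule that[OF \<delta>R(1) _ H(1-4)])
    show "\<delta> \<le> r"
      using \<delta>R(2) by (simp add: \<epsilon>_def)
    fix t :: real and p assume tp: "t \<in> {0..1}" "p \<in> X"
    consider "H (t,p) = f p" | p' where "p \<in> cball x0 \<delta>" "p' \<in> X \<inter> cball x0 \<epsilon>" "H (t,p) = f p'"
      | "p \<in> cball x0 \<delta>" "H (t,p) \<in> path_image \<gamma>"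
      using H(5)[OF tp] by blast
    then show "dist (H (t,p)) (f p) \<le> E + \<eta>"
    proof cases
      case 1
      then show ?thesis
        using \<open>E > 0\<close> \<open>\<eta> > 0\<close> by simp
    next
      case 2
      then show ?thesis
        using f_near_x0[of p p'] tp \<open>E > 0\<close> by simp
    next
      case 3
      then have "dist (H (t,p)) (f x0) < E" "dist (f x0) (f p) < \<eta>"
        using \<gamma>(4) f_near_x0[of p x0] tp \<open>x0 \<in> X\<close> \<open>\<epsilon> > 0\<close> by (auto simp: dist_commute)
      then show ?thesis
        using dist_triangle[of "H (t,p)" "f p" "f x0"] by simp
    qed
  qed
qed

text \<open>Near \<open>x n\<close> the frontier is the circle through \<open>x n\<close>, which contains only finitely many
  of the points.\<close>
lemma standard_peano_continuum_boundary_points_separated: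
  assumes std: "standard_peano_continuum X" and "inj x"
    and on_circle: "\<And>n. \<exists>C \<in> isolated_boundary_circles X. x n \<in> C"
    and finite: "\<And>C. C \<in> isolated_boundary_circles X \<Longrightarrow> finite {n. x n \<in> C}"
  obtains \<rho> where "\<And>n. \<rho> n > 0" "\<And>m n. m \<noteq> n \<Longrightarrow> \<rho> n \<le> dist (x m) (x n)"
proof -
  have "\<exists>\<rho>>0. \<forall>m. m \<noteq> n \<longrightarrow> \<rho> \<le> dist (x m) (x n)" for n
  proof -
    obtain C where C: "C \<in> isolated_boundary_circles X" "x n \<in> C"
      using on_circle by blast
    then obtain \<eta> where "\<eta> > 0" and \<eta>: "ball (x n) \<eta> \<inter> Fr X \<subseteq> C"
      using std by (metis isolated_boundary_circleE openin_contains_ball)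
    define M where "M = {m. x m \<in> C} - {n}"
    define \<rho> where "\<rho> = Min (insert \<eta> ((\<lambda>m. dist (x m) (x n)) ` M))"
    have "finite M"
      using finite[OF C(1)] by (simp add: M_def)
    have "\<rho> > 0"
      using \<open>finite M\<close> \<open>\<eta> > 0\<close> \<open>inj x\<close> by (auto simp: \<rho>_def M_def inj_eq)
    moreover have "\<rho> \<le> dist (x m) (x n)" if "m \<noteq> n" for m
    proof (cases "m \<in> M")
      case True
      then show ?thesis
        using \<open>finite M\<close> by (simp add: \<rho>_def)
    next
      case False
      have "x m \<in> Fr X"
        using on_circle std isolated_boundary_circle_subset_Fr by blast
      then have "\<eta> \<le> dist (x m) (x n)"
        using False \<eta> that by (force simp: M_def dist_commute)
      moreover have "\<rho> \<le> \<eta>"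
        using \<open>finite M\<close> by (simp add: \<rho>_def)
      ultimately show ?thesis
        by linarith
    qed
    ultimately show ?thesis
      by blast
  qed
  then show ?thesis
    using that by metis
qed

lemma standard_peano_continuum_point_homotopy_sequence:
  fixes f :: "real^2 \<Rightarrow> 'b::metric_space"
  assumes std: "standard_peano_continuum X" and f_cont: "continuous_on X f"
    and on_circle: "\<And>n. \<exists>C \<in> isolated_boundary_circles X. x n \<in> C"
    and \<gamma>: "\<And>n. path (\<gamma> n)" "\<And>n. pathstart (\<gamma> n) = f (x n)" "\<And>n. pathfinish (\<gamma> n) = y n"
      "\<And>n. path_image (\<gamma> n) \<subseteq> ball (f (x n)) (E n)"
    and r_pos: "\<And>n. r n > 0" and \<eta>_pos: "\<And>n. \<eta> n > 0"
  obtains \<delta> and H :: "nat \<Rightarrow> real \<times> (real^2) \<Rightarrow> 'b" where "\<And>n. \<delta> n > 0" "\<And>n. \<delta> n \<le> r n"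
    "\<And>n. continuous_on ({0..1} \<times> X) (H n)"
    "\<And>n p. p \<in> X \<Longrightarrow> H n (0,p) = f p"
    "\<And>n t p. t \<in> {0..1} \<Longrightarrow> p \<in> X \<Longrightarrow> p \<notin> ball (x n) (\<delta> n) \<Longrightarrow> H n (t,p) = f p"
    "\<And>n. H n (1, x n) = y n"
    "\<And>n t p. t \<in> {0..1} \<Longrightarrow> p \<in> X \<Longrightarrow> dist (H n (t,p)) (f p) \<le> E n + \<eta> n"
proof -
  define moves where "moves n \<delta> H \<longleftrightarrow> \<delta> > 0 \<and> \<delta> \<le> r n \<and> continuous_on ({0..1} \<times> X) H \<and>
    (\<forall>p\<in>X. H (0,p) = f p) \<and> (\<forall>t\<in>{0..1}. \<forall>p\<in>X. p \<notin> ball (x n) \<delta> \<longrightarrow> H (t,p) = f p) \<and>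
    H (1, x n) = y n \<and> (\<forall>t\<in>{0..1}. \<forall>p\<in>X. dist (H (t,p)) (f p) \<le> E n + \<eta> n)"
    for n \<delta> and H :: "real \<times> (real^2) \<Rightarrow> 'b"
  have "\<exists>\<delta> H. moves n \<delta> H" for n
  proof -
    obtain C where "C \<in> isolated_boundary_circles X" "x n \<in> C"
      using on_circle by blast
    then show ?thesis
    proof (rule standard_peano_continuum_point_homotopy[OF std f_cont _ _ \<gamma>[of n],
          where r = "r n" and \<eta> = "\<eta> n"])
      fix \<delta> and H :: "real \<times> (real^2) \<Rightarrow> 'b"
      assume "\<delta> > 0" "\<delta> \<le> r n" "continuous_on ({0..1} \<times> X) H"
        "\<And>p. p \<in> X \<Longrightarrow> H (0,p) = f p"
        "\<And>t p. t \<in> {0..1} \<Longrightarrow> p \<in> X \<Longrightarrow> p \<notin> ball (x n) \<delta> \<Longrightarrow> H (t,p) = f p"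
        "H (1, x n) = y n"
        "\<And>t p. t \<in> {0..1} \<Longrightarrow> p \<in> X \<Longrightarrow> dist (H (t,p)) (f p) \<le> E n + \<eta> n"
      then show "\<exists>\<delta> H. moves n \<delta> H"
        unfolding moves_def by (intro exI[of _ \<delta>] exI[of _ H]) auto
    qed (use r_pos \<eta>_pos in auto)
  qed
  then obtain \<delta> H where "\<And>n. moves n (\<delta> n) (H n)"
    by metis
  then show ?thesis
    by (intro that[of \<delta> H]) (auto simp: moves_def)
qed

lemma standard_peano_continuum_homotopic_moving_points:
  fixes f :: "real^2 \<Rightarrow> 'b::metric_space"
  assumes std: "standard_peano_continuum X" and f_cont: "continuous_on X f"
    and on_circle: "\<And>n. \<exists>C \<in> isolated_boundary_circles X. x n \<in> C"
    and \<rho>: "\<And>n. \<rho> n > 0" "\<And>m n. m \<noteq> n \<Longrightarrow> \<rho> n \<le> dist (x m) (x n)"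
    and \<gamma>: "\<And>n. path (\<gamma> n)" "\<And>n. pathstart (\<gamma> n) = f (x n)" "\<And>n. pathfinish (\<gamma> n) = y n"
      "\<And>n. path_image (\<gamma> n) \<subseteq> ball (f (x n)) (E n)"
    and "E \<longlonglongrightarrow> 0"
  shows "\<exists>g. continuous_on X g \<and> homotopic_with_canon (\<lambda>_. True) X UNIV f g \<and> (\<forall>n. g (x n) = y n)"
proof -
  have radii: "\<rho> n / 2 > 0" "inverse (real (Suc n)) > 0" for n
    using \<rho>(1) by simp_all
  obtain \<delta> and H :: "nat \<Rightarrow> real \<times> (real^2) \<Rightarrow> 'b" where H: "\<And>n. \<delta> n > 0" "\<And>n. \<delta> n \<le> \<rho> n / 2"
    "\<And>n. continuous_on ({0..1} \<times> X) (H n)"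
    "\<And>n p. p \<in> X \<Longrightarrow> H n (0,p) = f p"
    "\<And>n t p. t \<in> {0..1} \<Longrightarrow> p \<in> X \<Longrightarrow> p \<notin> ball (x n) (\<delta> n) \<Longrightarrow> H n (t,p) = f p"
    "\<And>n. H n (1, x n) = y n"
    "\<And>n t p. t \<in> {0..1} \<Longrightarrow> p \<in> X \<Longrightarrow> dist (H n (t,p)) (f p) \<le> E n + inverse (real (Suc n))"
    using standard_peano_continuum_point_homotopy_sequence[where x = x and \<gamma> = \<gamma> and E = E
        and r = "\<lambda>n. \<rho> n / 2" and \<eta> = "\<lambda>n. inverse (real (Suc n))", OF std f_cont on_circle \<gamma> radii]
    by blast
  have disjoint: "ball (x m) (\<delta> m) \<inter> ball (x n) (\<delta> n) = {}" if "m \<noteq> n" for m n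
    using \<rho>(2)[OF that] \<rho>(2)[of n m] that H(2)[of m] H(2)[of n]
    by (intro disjoint_ballI) (simp add: dist_commute)
  have vanishing: "(\<lambda>n. E n + inverse (real (Suc n))) \<longlonglongrightarrow> 0"
    using tendsto_add[OF \<open>E \<longlonglongrightarrow> 0\<close> LIMSEQ_inverse_real_of_nat] by simp
  obtain g where g: "continuous_on X g" "homotopic_with_canon (\<lambda>_. True) X UNIV f g"
    "\<forall>n. \<forall>p\<in>ball (x n) (\<delta> n). g p = H n (1,p)"
    using homotopic_paste_disjoint_supports[where S = "\<lambda>n. ball (x n) (\<delta> n)",
        OF f_cont H(3,4) open_ball disjoint H(5,7) vanishing] by blast
  have "g (x n) = y n" for n
    using g(3) H(1,6) centre_in_ball by metis
  with g(1,2) show ?thesis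
    by blast
qed

theorem mainTheorem15:
  fixes X :: "(real^2) set" and f :: "real^2 \<Rightarrow> 'b::metric_space"
    and x :: "nat \<Rightarrow> real^2" and y :: "nat \<Rightarrow> 'b"
  assumes "standard_peano_continuum X"
    and "continuous_on X f"
    and "inj x"
    and "\<And>n. x n \<in> X"
    and "\<And>n. \<exists>C \<in> isolated_boundary_circles X. x n \<in> C"
    and "\<And>C. C \<in> isolated_boundary_circles X \<Longrightarrow> finite {n. x n \<in> C}"
    and "\<And>n. y n \<in> f ` X"
    and "(\<lambda>n. dist (f (x n)) (y n)) \<longlonglongrightarrow> 0"
  shows "\<exists>g. continuous_on X g \<and> homotopic_with_canon (\<lambda>_. True) X UNIV f g \<and>
             (\<forall>n. g (x n) = y n)"
proof -
  obtain \<gamma> E where \<gamma>: "\<And>n. path (\<gamma> n)" "\<And>n. pathstart (\<gamma> n) = f (x n)"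
    "\<And>n. pathfinish (\<gamma> n) = y n" "\<And>n. path_image (\<gamma> n) \<subseteq> ball (f (x n)) (E n)"
    and "E \<longlonglongrightarrow> 0"
    using paths_to_nearby_values_vanishing[OF standard_peano_continuumD(1,3,4)[OF assms(1)] assms(2,4,7,8)]
    by blast
  obtain \<rho> where \<rho>: "\<And>n. \<rho> n > 0" "\<And>m n. m \<noteq> n \<Longrightarrow> \<rho> n \<le> dist (x m) (x n)"
    using standard_peano_continuum_boundary_points_separated[OF assms(1,3,5,6)] by blast
  show ?thesis
    by (rule standard_peano_continuum_homotopic_moving_points[OF assms(1,2,5) \<rho> \<gamma> \<open>E \<longlonglongrightarrow> 0\<close>])
qed

end
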